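(* Let $(F,+,\cdot)$ be a (left) near-field and let $\sigma,\rho$ be multiplicative automorphisms of $F$. Let $F^{\sigma,\rho}$ denote the abelian group $(F,+_\sigma)$ equipped with the action $\alpha\cdot_\rho\beta=\rho(\alpha)\beta$ of $(F,\cdot)$. Then $F^{\sigma,\rho}$ is a near-vector space over the scalar group $(F,\cdot,1,0,-1)$, its quasi-kernel is $Q(F^{\sigma,\rho})=F$, and for every $\gamma\in F\setminus\{0\}$ the addition $+_\gamma$ determined by $\gamma\in Q(F^{\sigma,\rho})$ satisfies $$+_\gamma=+_{\sigma(\gamma),\sigma\circ\rho}=+_{\varphi_{\sigma(\gamma)}\circ\sigma\circ\rho}=+_{\sigma\circ\varphi_\gamma\circ\rho}.$$ In particular $+_1=+_{\sigma\circ\rho}$.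
   Context: A (left) near-field is $(F,+,\cdot,0,1)$ where $(F,\cdot,1)$ is a monoid, $(F\setminus\{0\},\cdot)$ is a group, $(F,+,0)$ is an abelian group, and $\alpha(\beta+\gamma)=\alpha\beta+\alpha\gamma$. A multiplicative automorphism is a monoid automorphism of $(F,\cdot)$. For a multiplicative automorphism $\tau$, $\alpha+_\tau\beta=\tau^{-1}(\tau(\alpha)+\tau(\beta))$. For $\delta\in F\setminus\{0\}$, $\varphi_\delta(\alpha)=\delta^{-1}\alpha\delta$. For $\delta\in F\setminus\{0\}$, let $\alpha\oplus_\delta\beta=(\alpha\delta+\beta\delta)\delta^{-1}$ (the addition determined by $\delta$ in the near-field $F$ viewed as a near-vector space over itself), and $\alpha+_{\delta,\tau}\beta=\tau^{-1}(\tau(\alpha)\oplus_\delta\tau(\beta))$. A scalar group, $F$-space, quasi-kernel $Q(V)=\{u:\forall\alpha,\beta\ \exists\gamma,\ \alpha u+\beta u=\gamma u\}$ and near-vector space (an $F$-space with free action whose quasi-kernel generates it additively) are as usual; for $u\in Q(V)\setminus\{0\}$, $\alpha+_u\beta$ is the unique $\gamma$ with $\alpha u+\beta u=\gamma u$ (here with the addition and action of $F^{\sigma,\rho}$). *)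

theory Defs
  imports Main
begin

(* All structures live on the whole type (carrier = UNIV). *)

definition is_monoid :: "('a \<Rightarrow> 'a \<Rightarrow> 'a) \<Rightarrow> 'a \<Rightarrow> bool" where
  "is_monoid m e \<longleftrightarrow> (\<forall>a b c. m (m a b) c = m a (m b c)) \<and> (\<forall>a. m e a = a \<and> m a e = a)"

definition is_abelian_group :: "('a \<Rightarrow> 'a \<Rightarrow> 'a) \<Rightarrow> 'a \<Rightarrow> bool" where
  "is_abelian_group p z \<longleftrightarrow> is_monoid p z \<and> (\<forall>a b. p a b = p b a) \<and> (\<forall>a. \<exists>b. p a b = z)"

definition nonzero_group :: "('a \<Rightarrow> 'a \<Rightarrow> 'a) \<Rightarrow> 'a \<Rightarrow> 'a \<Rightarrow> bool" where
  "nonzero_group m u0 u1 \<longleftrightarrow> u1 \<noteq> u0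
     \<and> (\<forall>a b. a \<noteq> u0 \<and> b \<noteq> u0 \<longrightarrow> m a b \<noteq> u0)
     \<and> (\<forall>a b c. m (m a b) c = m a (m b c))
     \<and> (\<forall>a. a \<noteq> u0 \<longrightarrow> m u1 a = a \<and> m a u1 = a)
     \<and> (\<forall>a. a \<noteq> u0 \<longrightarrow> (\<exists>b. b \<noteq> u0 \<and> m a b = u1 \<and> m b a = u1))"

definition near_field :: "('a \<Rightarrow> 'a \<Rightarrow> 'a) \<Rightarrow> ('a \<Rightarrow> 'a \<Rightarrow> 'a) \<Rightarrow> 'a \<Rightarrow> 'a \<Rightarrow> bool" where
  "near_field add mul u0 u1 \<longleftrightarrow> is_monoid mul u1 \<and> nonzero_group mul u0 u1
     \<and> is_abelian_group add u0
     \<and> (\<forall>a b c. mul a (add b c) = add (mul a b) (mul a c))"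

definition mult_aut :: "('a \<Rightarrow> 'a \<Rightarrow> 'a) \<Rightarrow> 'a \<Rightarrow> ('a \<Rightarrow> 'a) \<Rightarrow> bool" where
  "mult_aut mul u1 \<tau> \<longleftrightarrow> bij \<tau> \<and> (\<forall>a b. \<tau> (mul a b) = mul (\<tau> a) (\<tau> b)) \<and> \<tau> u1 = u1"

definition nf_neg :: "('a \<Rightarrow> 'a \<Rightarrow> 'a) \<Rightarrow> 'a \<Rightarrow> 'a \<Rightarrow> 'a" where
  "nf_neg add u0 a = (THE b. add a b = u0)"

definition nf_inv :: "('a \<Rightarrow> 'a \<Rightarrow> 'a) \<Rightarrow> 'a \<Rightarrow> 'a \<Rightarrow> 'a" where
  "nf_inv mul u1 d = (THE x. mul d x = u1)"

definition tw_add :: "('a \<Rightarrow> 'a \<Rightarrow> 'a) \<Rightarrow> ('a \<Rightarrow> 'a) \<Rightarrow> 'a \<Rightarrow> 'a \<Rightarrow> 'a" where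
  "tw_add add \<tau> a b = inv \<tau> (add (\<tau> a) (\<tau> b))"

definition phi :: "('a \<Rightarrow> 'a \<Rightarrow> 'a) \<Rightarrow> 'a \<Rightarrow> 'a \<Rightarrow> 'a \<Rightarrow> 'a" where
  "phi mul u1 d a = mul (mul (nf_inv mul u1 d) a) d"

definition oplus_d :: "('a \<Rightarrow> 'a \<Rightarrow> 'a) \<Rightarrow> ('a \<Rightarrow> 'a \<Rightarrow> 'a) \<Rightarrow> 'a \<Rightarrow> 'a \<Rightarrow> 'a \<Rightarrow> 'a \<Rightarrow> 'a" where
  "oplus_d add mul u1 d a b = mul (add (mul a d) (mul b d)) (nf_inv mul u1 d)"

definition add_dt :: "('a \<Rightarrow> 'a \<Rightarrow> 'a) \<Rightarrow> ('a \<Rightarrow> 'a \<Rightarrow> 'a) \<Rightarrow> 'a \<Rightarrow> 'a \<Rightarrow> ('a \<Rightarrow> 'a) \<Rightarrow> 'a \<Rightarrow> 'a \<Rightarrow> 'a" where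
  "add_dt add mul u1 d \<tau> a b = inv \<tau> (oplus_d add mul u1 d (\<tau> a) (\<tau> b))"

text \<open>Scalar group (F, mul, 1, 0, m) with m playing the role of -1.\<close>
definition scalar_group :: "('s \<Rightarrow> 's \<Rightarrow> 's) \<Rightarrow> 's \<Rightarrow> 's \<Rightarrow> 's \<Rightarrow> bool" where
  "scalar_group mul u1 u0 m \<longleftrightarrow> is_monoid mul u1
     \<and> (\<forall>a. mul u0 a = u0 \<and> mul a u0 = u0)
     \<and> nonzero_group mul u0 u1
     \<and> m \<noteq> u0 \<and> mul m m = u1 \<and> (\<forall>a. mul m a = mul a m)"

definition F_space :: "('s \<Rightarrow> 's \<Rightarrow> 's) \<Rightarrow> 's \<Rightarrow> 's \<Rightarrow> 's \<Rightarrow>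
     ('v \<Rightarrow> 'v \<Rightarrow> 'v) \<Rightarrow> 'v \<Rightarrow> ('s \<Rightarrow> 'v \<Rightarrow> 'v) \<Rightarrow> bool" where
  "F_space mul u1 u0 m vadd vz act \<longleftrightarrow> scalar_group mul u1 u0 m
     \<and> is_abelian_group vadd vz
     \<and> (\<forall>a b v. act (mul a b) v = act a (act b v))
     \<and> (\<forall>v. act u1 v = v)
     \<and> (\<forall>v. act u0 v = vz)
     \<and> (\<forall>v. vadd (act m v) v = vz)
     \<and> (\<forall>a u v. act a (vadd u v) = vadd (act a u) (act a v))"

definition quasi_kernel :: "('v \<Rightarrow> 'v \<Rightarrow> 'v) \<Rightarrow> ('s \<Rightarrow> 'v \<Rightarrow> 'v) \<Rightarrow> 'v set" where
  "quasi_kernel vadd act = {u. \<forall>a b. \<exists>c. vadd (act a u) (act b u) = act c u}"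

inductive_set add_span :: "('v \<Rightarrow> 'v \<Rightarrow> 'v) \<Rightarrow> 'v \<Rightarrow> 'v set \<Rightarrow> 'v set"
  for vadd vz S where
  base: "x \<in> S \<Longrightarrow> x \<in> add_span vadd vz S"
| zero: "vz \<in> add_span vadd vz S"
| plus: "x \<in> add_span vadd vz S \<Longrightarrow> y \<in> add_span vadd vz S \<Longrightarrow> vadd x y \<in> add_span vadd vz S"
| neg: "x \<in> add_span vadd vz S \<Longrightarrow> vadd x y = vz \<Longrightarrow> y \<in> add_span vadd vz S"

definition near_vector_space :: "('s \<Rightarrow> 's \<Rightarrow> 's) \<Rightarrow> 's \<Rightarrow> 's \<Rightarrow> 's \<Rightarrow>
     ('v \<Rightarrow> 'v \<Rightarrow> 'v) \<Rightarrow> 'v \<Rightarrow> ('s \<Rightarrow> 'v \<Rightarrow> 'v) \<Rightarrow> bool" where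
  "near_vector_space mul u1 u0 m vadd vz act \<longleftrightarrow> F_space mul u1 u0 m vadd vz act
     \<and> (\<forall>a b v. act a v = act b v \<longrightarrow> a = b \<or> v = vz)
     \<and> add_span vadd vz (quasi_kernel vadd act) = UNIV"

text \<open>For u in Q(V) minus 0: alpha +_u beta is the unique gamma with alpha u + beta u = gamma u.\<close>
definition qk_add :: "('v \<Rightarrow> 'v \<Rightarrow> 'v) \<Rightarrow> ('s \<Rightarrow> 'v \<Rightarrow> 'v) \<Rightarrow> 'v \<Rightarrow> 's \<Rightarrow> 's \<Rightarrow> 's" where
  "qk_add vadd act u a b = (THE c. vadd (act a u) (act b u) = act c u)"

end

theory Submission
  imports Defs
begin

text \<open>
  Because \<open>\<rho>\<close> is bijective, every nonzero \<open>u\<close> satisfies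
  \<open>F \<cdot>\<^sub>\<rho> u = F\<close>, so every vector lies in the quasi-kernel. Applying \<open>\<sigma>\<close> to
  \<open>\<alpha> \<cdot>\<^sub>\<rho> \<gamma> +\<^sub>\<sigma> \<beta> \<cdot>\<^sub>\<rho> \<gamma> = \<gamma>' \<cdot>\<^sub>\<rho> \<gamma>\<close> turns it into
  \<open>\<sigma>\<rho>\<alpha> \<sigma>\<gamma> + \<sigma>\<rho>\<beta> \<sigma>\<gamma> = \<sigma>\<rho>\<gamma>' \<sigma>\<gamma>\<close>, i.e. \<open>\<sigma>\<rho>\<gamma>' = \<sigma>\<rho>\<alpha> \<oplus>\<^bsub>\<sigma>\<gamma>\<^esub> \<sigma>\<rho>\<beta>\<close>.
  The other forms of \<open>+\<^sub>\<gamma>\<close> follow because \<open>\<oplus>\<^sub>\<delta>\<close> is \<open>+\<close> transported along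
  \<open>\<phi>\<^sub>\<delta>\<close>, and \<open>\<phi>\<^bsub>\<sigma>\<gamma>\<^esub> \<circ> \<sigma> = \<sigma> \<circ> \<phi>\<^sub>\<gamma>\<close>.
\<close>

lemma tw_add_eqI:
  assumes "inj \<tau>" and "\<tau> c = add (\<tau> a) (\<tau> b)"
  shows "tw_add add \<tau> a b = c"
  unfolding tw_add_def using assms by (simp add: inv_f_eq)

lemma is_abelian_group_tw_add:
  assumes "is_abelian_group add z" and "bij \<tau>"
  shows "is_abelian_group (tw_add add \<tau>) (inv \<tau> z)"
proof -
  have surj: "\<tau> (inv \<tau> x) = x" and inj: "inv \<tau> (\<tau> x) = x" for x
    using assms(2) by (simp_all add: bij_is_surj surj_f_inv_f bij_is_inj)
  show ?thesis
    using assms(1) unfolding is_abelian_group_def is_monoid_def tw_add_def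
    by (auto simp: surj inj) (metis inj surj)
qed

lemma qk_add_eqI:
  assumes "vadd (act a u) (act b u) = act c u"
    and "\<And>c'. act c' u = act c u \<Longrightarrow> c' = c"
  shows "qk_add vadd act u a b = c"
  unfolding qk_add_def using assms by (metis (mono_tags) the_equality)

lemma mult_aut_comp:
  "mult_aut mul u1 \<sigma> \<Longrightarrow> mult_aut mul u1 \<rho> \<Longrightarrow> mult_aut mul u1 (\<sigma> \<circ> \<rho>)"
  unfolding mult_aut_def by (auto intro: bij_comp)

locale nearfield =
  fixes add mul :: "'a \<Rightarrow> 'a \<Rightarrow> 'a" and u0 u1 :: 'a
  assumes near_field: "near_field add mul u0 u1"
begin

lemma mul_assoc: "mul (mul a b) c = mul a (mul b c)"
  using near_field unfolding near_field_def is_monoid_def by blast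

lemma mul_one_left [simp]: "mul u1 a = a"
  and mul_one_right [simp]: "mul a u1 = a"
  using near_field unfolding near_field_def is_monoid_def by blast+

lemma add_assoc: "add (add a b) c = add a (add b c)"
  and add_commute: "add a b = add b a"
  and add_zero_left [simp]: "add u0 a = a"
  and add_zero_right [simp]: "add a u0 = a"
  and add_inverse_ex: "\<exists>b. add a b = u0"
  using near_field unfolding near_field_def is_abelian_group_def is_monoid_def by blast+

lemma mul_add_distrib_left: "mul a (add b c) = add (mul a b) (mul a c)"
  using near_field unfolding near_field_def by blast

lemma one_neq_zero: "u1 \<noteq> u0"
  and mul_nonzero: "a \<noteq> u0 \<Longrightarrow> b \<noteq> u0 \<Longrightarrow> mul a b \<noteq> u0"
  and mul_inverse_ex: "a \<noteq> u0 \<Longrightarrow> \<exists>b. b \<noteq> u0 \<and> mul a b = u1 \<and> mul b a = u1"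
  using near_field unfolding near_field_def nonzero_group_def by blast+

lemma add_left_cancel:
  assumes "add x y = add x z"
  shows "y = z"
proof -
  obtain n where n: "add n x = u0" using add_inverse_ex add_commute by metis
  have "y = add (add n x) y" using n by simp
  also have "\<dots> = add (add n x) z" using assms by (simp add: add_assoc)
  also have "\<dots> = z" using n by simp
  finally show ?thesis .
qed

lemma mul_zero_right [simp]: "mul a u0 = u0"
proof -
  have "add (mul a u0) (mul a u0) = add (mul a u0) u0"
    using mul_add_distrib_left[of a u0 u0] by simp
  then show ?thesis by (rule add_left_cancel)
qed

lemma mul_right_cancel:
  assumes "a \<noteq> u0" and "mul x a = mul y a"
  shows "x = y"
proof -
  obtain b where "mul a b = u1" using mul_inverse_ex[OF assms(1)] by blast
  then have "x = mul (mul x a) b" by (simp add: mul_assoc)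
  also have "\<dots> = y" using \<open>mul a b = u1\<close> by (simp add: assms(2) mul_assoc)
  finally show ?thesis .
qed

lemma mul_left_cancel:
  assumes "a \<noteq> u0" and "mul a x = mul a y"
  shows "x = y"
proof -
  obtain b where "mul b a = u1" using mul_inverse_ex[OF assms(1)] by blast
  then have "x = mul b (mul a x)" by (simp add: mul_assoc[symmetric])
  also have "\<dots> = y" using \<open>mul b a = u1\<close> by (simp add: assms(2) mul_assoc[symmetric])
  finally show ?thesis .
qed

lemma mul_zero_left [simp]: "mul u0 a = u0"
proof (cases "a = u0")
  case False
  then obtain b where "b \<noteq> u0" "mul a b = u1" using mul_inverse_ex by blast
  moreover from \<open>mul a b = u1\<close> have "mul (mul u0 a) b = u0" by (simp add: mul_assoc)
  ultimately show ?thesis using mul_nonzero by blast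
qed simp

lemma
  assumes "d \<noteq> u0"
  shows mul_nf_inv: "mul d (nf_inv mul u1 d) = u1"
    and nf_inv_mul: "mul (nf_inv mul u1 d) d = u1"
    and nf_inv_nonzero: "nf_inv mul u1 d \<noteq> u0"
proof -
  obtain b where b: "b \<noteq> u0" "mul d b = u1" "mul b d = u1"
    using mul_inverse_ex[OF assms] by blast
  have "nf_inv mul u1 d = b"
    unfolding nf_inv_def using b(2) mul_left_cancel[OF assms] by (intro the_equality) simp_all
  with b show "mul d (nf_inv mul u1 d) = u1" "mul (nf_inv mul u1 d) d = u1"
    "nf_inv mul u1 d \<noteq> u0" by simp_all
qed

lemma nf_inv_one: "nf_inv mul u1 u1 = u1"
  using mul_nf_inv[OF one_neq_zero] by simp

abbreviation minus_one :: 'a where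
  "minus_one \<equiv> nf_neg add u0 u1"

lemma one_add_minus_one: "add u1 minus_one = u0"
proof -
  have "\<exists>!b. add u1 b = u0" using add_inverse_ex add_left_cancel by metis
  then show ?thesis unfolding nf_neg_def by (rule theI')
qed

lemma minus_one_nonzero: "minus_one \<noteq> u0"
  using one_add_minus_one one_neq_zero by auto

lemma add_mul_minus_one_right: "add a (mul a minus_one) = u0"
  using mul_add_distrib_left[of a u1 minus_one] by (simp add: one_add_minus_one)

lemma minus_one_squared: "mul minus_one minus_one = u1"
proof -
  have "add minus_one (mul minus_one minus_one) = add minus_one u1"
    using add_mul_minus_one_right one_add_minus_one add_commute by simp
  then show ?thesis by (rule add_left_cancel)
qed

lemma minus_one_squared_left: "mul minus_one (mul minus_one a) = a"
  by (simp add: mul_assoc[symmetric] minus_one_squared)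

lemma square_eq_one_cases:
  assumes "mul x x = u1"
  shows "x = u1 \<or> x = minus_one"
proof (cases "add x u1 = u0")
  case True
  then have "add u1 x = add u1 minus_one" using one_add_minus_one add_commute by simp
  then show ?thesis using add_left_cancel by blast
next
  case False
  have "mul x (add x u1) = mul u1 (add x u1)"
    using assms by (simp add: mul_add_distrib_left add_commute)
  then show ?thesis using False mul_right_cancel by blast
qed

text \<open>
  The conjugate \<open>a\<^sup>-\<^sup>1 (-1) a\<close> squares to \<open>1\<close>, so it is \<open>1\<close> or \<open>-1\<close>;
  either way \<open>-1\<close> commutes with \<open>a\<close>.
\<close>
lemma minus_one_central: "mul minus_one a = mul a minus_one"
proof (cases "a = u0")
  case False
  let ?ai = "nf_inv mul u1 a"
  have cancel: "mul a (mul ?ai z) = z" "mul ?ai (mul a z) = z" for z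
    using mul_nf_inv[OF False] nf_inv_mul[OF False] by (simp_all add: mul_assoc[symmetric])
  have "mul (mul (mul ?ai minus_one) a) (mul (mul ?ai minus_one) a) = u1"
    using nf_inv_mul[OF False] by (simp add: mul_assoc cancel minus_one_squared_left)
  then consider "mul (mul ?ai minus_one) a = u1" | "mul (mul ?ai minus_one) a = minus_one"
    using square_eq_one_cases by blast
  then show ?thesis
  proof cases
    case 1
    then have "mul minus_one a = mul u1 a"
      by (metis cancel(1) mul_assoc mul_one_right)
    then have "minus_one = u1" using False mul_right_cancel by blast
    then show ?thesis by simp
  next
    case 2
    then show ?thesis by (metis cancel(1) mul_assoc)
  qed
qed simp

lemma add_mul_minus_one_left: "add (mul minus_one a) a = u0"
  using add_mul_minus_one_right add_commute minus_one_central by metis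

lemma phi_one: "phi mul u1 u1 = id"
  by (auto simp: phi_def nf_inv_one)

lemma mul_oplus_d:
  assumes "d \<noteq> u0"
  shows "mul (oplus_d add mul u1 d x y) d = add (mul x d) (mul y d)"
  unfolding oplus_d_def using nf_inv_mul[OF assms] by (simp add: mul_assoc)

lemma phi_oplus_d:
  assumes "d \<noteq> u0"
  shows "phi mul u1 d (oplus_d add mul u1 d x y) = add (phi mul u1 d x) (phi mul u1 d y)"
  unfolding phi_def by (simp add: mul_assoc mul_oplus_d[OF assms] mul_add_distrib_left)

lemma inj_phi:
  assumes "d \<noteq> u0"
  shows "inj (phi mul u1 d)"
  by (rule injI) (metis assms mul_left_cancel mul_right_cancel nf_inv_nonzero phi_def)

lemma add_dt_eq_tw_add_phi:
  assumes "d \<noteq> u0" and "bij \<tau>"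
  shows "add_dt add mul u1 d \<tau> = tw_add add (phi mul u1 d \<circ> \<tau>)"
proof (intro ext)
  fix a b
  have "inj (phi mul u1 d \<circ> \<tau>)"
    using inj_phi[OF assms(1)] bij_is_inj[OF assms(2)] by (rule inj_compose)
  moreover have "\<tau> (add_dt add mul u1 d \<tau> a b) = oplus_d add mul u1 d (\<tau> a) (\<tau> b)"
    unfolding add_dt_def using assms(2) by (simp add: bij_is_surj surj_f_inv_f)
  ultimately show "add_dt add mul u1 d \<tau> a b = tw_add add (phi mul u1 d \<circ> \<tau>) a b"
    by (intro tw_add_eqI[symmetric]) (simp_all add: phi_oplus_d[OF assms(1)])
qed

end

locale nearfield_aut = nearfield +
  fixes \<tau> :: "'a \<Rightarrow> 'a"
  assumes mult_aut: "mult_aut mul u1 \<tau>"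
begin

lemma bij: "bij \<tau>"
  and hom: "\<tau> (mul a b) = mul (\<tau> a) (\<tau> b)"
  and map_one [simp]: "\<tau> u1 = u1"
  using mult_aut unfolding mult_aut_def by blast+

lemma f_inv [simp]: "\<tau> (inv \<tau> x) = x"
  and inv_f [simp]: "inv \<tau> (\<tau> x) = x"
  using bij by (simp_all add: bij_is_surj surj_f_inv_f bij_is_inj)

lemma inj: "inj \<tau>"
  using bij by (rule bij_is_inj)

lemma map_zero [simp]: "\<tau> u0 = u0"
  using hom[of u0 "inv \<tau> u0"] by simp

lemma inv_zero [simp]: "inv \<tau> u0 = u0"
  using inv_f[of u0] by simp

lemma map_nonzero: "x \<noteq> u0 \<Longrightarrow> \<tau> x \<noteq> u0"
  using inj map_zero by (metis injD)

lemma map_minus_one [simp]: "\<tau> minus_one = minus_one"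
proof -
  have "mul (\<tau> minus_one) (\<tau> minus_one) = u1"
    by (simp flip: hom add: minus_one_squared)
  then have "\<tau> minus_one = u1 \<or> \<tau> minus_one = minus_one" by (rule square_eq_one_cases)
  then show ?thesis using minus_one_nonzero one_add_minus_one inj map_one
    by (metis add_zero_right injD)
qed

lemma map_nf_inv:
  assumes "d \<noteq> u0"
  shows "\<tau> (nf_inv mul u1 d) = nf_inv mul u1 (\<tau> d)"
proof (rule mul_left_cancel[OF map_nonzero[OF assms]])
  show "mul (\<tau> d) (\<tau> (nf_inv mul u1 d)) = mul (\<tau> d) (nf_inv mul u1 (\<tau> d))"
    by (simp flip: hom add: mul_nf_inv assms map_nonzero)
qed

lemma map_phi:
  assumes "d \<noteq> u0"
  shows "\<tau> (phi mul u1 d x) = phi mul u1 (\<tau> d) (\<tau> x)"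
  unfolding phi_def by (simp add: hom map_nf_inv[OF assms])

end

locale twisted_nearfield = nearfield +
  fixes \<sigma> \<rho> :: "'a \<Rightarrow> 'a"
  assumes mult_aut_\<sigma>: "mult_aut mul u1 \<sigma>"
    and mult_aut_\<rho>: "mult_aut mul u1 \<rho>"
begin

sublocale \<sigma>: nearfield_aut add mul u0 u1 \<sigma>
  using mult_aut_\<sigma> by unfold_locales

sublocale \<rho>: nearfield_aut add mul u0 u1 \<rho>
  using mult_aut_\<rho> by unfold_locales

sublocale \<sigma>\<rho>: nearfield_aut add mul u0 u1 "\<sigma> \<circ> \<rho>"
  using mult_aut_comp[OF mult_aut_\<sigma> mult_aut_\<rho>] by unfold_locales

abbreviation vadd :: "'a \<Rightarrow> 'a \<Rightarrow> 'a" where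
  "vadd \<equiv> tw_add add \<sigma>"

abbreviation act :: "'a \<Rightarrow> 'a \<Rightarrow> 'a" where
  "act \<equiv> \<lambda>a b. mul (\<rho> a) b"

lemma \<sigma>_vadd: "\<sigma> (vadd a b) = add (\<sigma> a) (\<sigma> b)"
  by (simp add: tw_add_def)

lemma act_free: "act a v = act b v \<Longrightarrow> a = b \<or> v = u0"
  using mul_right_cancel \<rho>.inj by (metis injD)

lemma F_space: "F_space mul u1 u0 minus_one vadd u0 act"
  unfolding F_space_def
proof (intro conjI allI)
  show "scalar_group mul u1 u0 minus_one"
    using near_field minus_one_nonzero minus_one_squared minus_one_central mul_zero_left mul_zero_right
    unfolding scalar_group_def near_field_def by blast
  show "is_abelian_group vadd u0"
    using is_abelian_group_tw_add[OF _ \<sigma>.bij] near_field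
    unfolding near_field_def by (metis \<sigma>.inv_zero)
  fix a b u v
  show "act (mul a b) v = act a (act b v)"
    by (simp add: \<rho>.hom mul_assoc)
  show "act u1 v = v" "act u0 v = u0"
    by simp_all
  show "vadd (act minus_one v) v = u0"
    by (rule \<sigma>.inj[THEN injD]) (simp add: \<sigma>_vadd \<sigma>.hom add_mul_minus_one_left)
  show "act a (vadd u v) = vadd (act a u) (act a v)"
    by (rule \<sigma>.inj[THEN injD]) (simp add: \<sigma>_vadd \<sigma>.hom mul_add_distrib_left)
qed

lemma quasi_kernel_eq_UNIV: "quasi_kernel vadd act = UNIV"
proof -
  have "\<exists>c. vadd (act a u) (act b u) = act c u" for a b u
  proof (cases "u = u0")
    case True
    then show ?thesis by (simp add: tw_add_def)
  next
    case False
    let ?w = "vadd (act a u) (act b u)"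
    have "?w = act (inv \<rho> (mul ?w (nf_inv mul u1 u))) u"
      using False by (simp add: mul_assoc nf_inv_mul)
    then show ?thesis ..
  qed
  then show ?thesis
    unfolding quasi_kernel_def by blast
qed

lemma near_vector_space: "near_vector_space mul u1 u0 minus_one vadd u0 act"
  unfolding near_vector_space_def quasi_kernel_eq_UNIV
  using F_space act_free by (blast intro: add_span.base)

lemma qk_add_eq_add_dt:
  assumes "\<gamma> \<noteq> u0"
  shows "qk_add vadd act \<gamma> = add_dt add mul u1 (\<sigma> \<gamma>) (\<sigma> \<circ> \<rho>)"
proof (intro ext qk_add_eqI)
  fix a b
  let ?c = "add_dt add mul u1 (\<sigma> \<gamma>) (\<sigma> \<circ> \<rho>) a b"
  have "\<sigma> (\<rho> ?c) = oplus_d add mul u1 (\<sigma> \<gamma>) (\<sigma> (\<rho> a)) (\<sigma> (\<rho> b))"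
    using \<sigma>\<rho>.f_inv unfolding add_dt_def by simp
  then have "\<sigma> (act ?c \<gamma>) = add (\<sigma> (act a \<gamma>)) (\<sigma> (act b \<gamma>))"
    by (simp add: \<sigma>.hom mul_oplus_d \<sigma>.map_nonzero[OF assms])
  then show "vadd (act a \<gamma>) (act b \<gamma>) = act ?c \<gamma>"
    by (intro tw_add_eqI \<sigma>.inj)
  show "c' = ?c" if "act c' \<gamma> = act ?c \<gamma>" for c'
    using act_free[OF that] assms by blast
qed

end

theorem mainTheorem5:
  fixes add mul :: "'a \<Rightarrow> 'a \<Rightarrow> 'a" and u0 u1 :: 'a and \<sigma> \<rho> :: "'a \<Rightarrow> 'a"
  assumes "near_field add mul u0 u1"
    and "mult_aut mul u1 \<sigma>" and "mult_aut mul u1 \<rho>"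
  shows "near_vector_space mul u1 u0 (nf_neg add u0 u1) (tw_add add \<sigma>) u0 (\<lambda>a b. mul (\<rho> a) b)
    \<and> quasi_kernel (tw_add add \<sigma>) (\<lambda>a b. mul (\<rho> a) b) = UNIV
    \<and> (\<forall>\<gamma>. \<gamma> \<noteq> u0 \<longrightarrow>
          qk_add (tw_add add \<sigma>) (\<lambda>a b. mul (\<rho> a) b) \<gamma> = add_dt add mul u1 (\<sigma> \<gamma>) (\<sigma> \<circ> \<rho>)
        \<and> add_dt add mul u1 (\<sigma> \<gamma>) (\<sigma> \<circ> \<rho>) = tw_add add (phi mul u1 (\<sigma> \<gamma>) \<circ> \<sigma> \<circ> \<rho>)
        \<and> tw_add add (phi mul u1 (\<sigma> \<gamma>) \<circ> \<sigma> \<circ> \<rho>) = tw_add add (\<sigma> \<circ> phi mul u1 \<gamma> \<circ> \<rho>))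
    \<and> qk_add (tw_add add \<sigma>) (\<lambda>a b. mul (\<rho> a) b) u1 = tw_add add (\<sigma> \<circ> \<rho>)"
proof -
  interpret twisted_nearfield add mul u0 u1 \<sigma> \<rho>
    using assms by unfold_locales
  have add_dt: "add_dt add mul u1 (\<sigma> \<gamma>) (\<sigma> \<circ> \<rho>) = tw_add add (phi mul u1 (\<sigma> \<gamma>) \<circ> \<sigma> \<circ> \<rho>)"
    if "\<gamma> \<noteq> u0" for \<gamma>
    using add_dt_eq_tw_add_phi[OF \<sigma>.map_nonzero[OF that] \<sigma>\<rho>.bij] by (simp add: comp_assoc)
  have phi_comm: "phi mul u1 (\<sigma> \<gamma>) \<circ> \<sigma> = \<sigma> \<circ> phi mul u1 \<gamma>" if "\<gamma> \<noteq> u0" for \<gamma>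
    using \<sigma>.map_phi[OF that] by auto
  have "qk_add vadd act u1 = tw_add add (\<sigma> \<circ> \<rho>)"
    using qk_add_eq_add_dt[OF one_neq_zero] add_dt[OF one_neq_zero] by (simp add: phi_one)
  then show ?thesis
    using near_vector_space quasi_kernel_eq_UNIV qk_add_eq_add_dt add_dt phi_comm by simp
qed

end
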